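(* Let $D\ge 1$ and $k\ge 0$ be integers, let $\mathbf{X}\in\mathbb{C}^{D\times m}$ be a snapshot matrix (whose columns are the state vectors $\mathbf{x}_0,\dots,\mathbf{x}_{m-1}\in\mathbb{C}^D$) with full singular value decomposition $\mathbf{X}=\mathbf{U}\boldsymbol{\Sigma}\mathbf{V}^*$, where $\mathbf{U}\in\mathbb{C}^{D\times D}$ is unitary. Let $\boldsymbol{\Omega}_0^{(x)},\dots,\boldsymbol{\Omega}_k^{(x)}\in\mathbb{C}^{D\times D}$ be arbitrary matrices and define $\boldsymbol{\Omega}_i^{(g)}=\mathbf{U}^*\boldsymbol{\Omega}_i^{(x)}\mathbf{U}$ for $i=0,\dots,k$. Define the $(k+1)D\times(k+1)D$ block companion matrices $$\mathbf{C}_x=\begin{bmatrix}\boldsymbol{\Omega}_0^{(x)} & \boldsymbol{\Omega}_1^{(x)} & \cdots & \boldsymbol{\Omega}_{k-1}^{(x)} & \boldsymbol{\Omega}_k^{(x)}\\ \mathbf{I} & \mathbf{0} & \cdots & \mathbf{0} & \mathbf{0}\\ \mathbf{0} & \mathbf{I} & \cdots & \mathbf{0} & \mathbf{0}\\ \vdots & & \ddots & & \vdots\\ \mathbf{0} & \cdots & \mathbf{0} & \mathbf{I} & \mathbf{0}\end{bmatrix},\qquad \mathbf{C}_g=\begin{bmatrix}\boldsymbol{\Omega}_0^{(g)} & \boldsymbol{\Omega}_1^{(g)} & \cdots & \boldsymbol{\Omega}_{k-1}^{(g)} & \boldsymbol{\Omega}_k^{(g)}\\ \mathbf{I} & \mathbf{0}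 & \cdots & \mathbf{0} & \mathbf{0}\\ \mathbf{0} & \mathbf{I} & \cdots & \mathbf{0} & \mathbf{0}\\ \vdots & & \ddots & & \vdots\\ \mathbf{0} & \cdots & \mathbf{0} & \mathbf{I} & \mathbf{0}\end{bmatrix},$$ where $\mathbf{I}$ and $\mathbf{0}$ are the $D\times D$ identity and zero matrices (for $k=0$ these are just $\boldsymbol{\Omega}_0^{(x)}$ and $\boldsymbol{\Omega}_0^{(g)}$). Let $(\lambda,\mathbf{w})$ be an eigenpair of $\mathbf{C}_g$ with $\lambda\neq 0$, i.e. $\mathbf{w}\neq 0$ and $\mathbf{C}_g\mathbf{w}=\lambda\mathbf{w}$, and write $\mathbf{w}=[\mathbf{w}^0;\mathbf{w}^1;\dots;\mathbf{w}^k]$ with blocks $\mathbf{w}^j\in\mathbb{C}^D$. Set $\boldsymbol{\phi}^0=\mathbf{U}\mathbf{w}^0$ and $\boldsymbol{\phi}=[\boldsymbol{\phi}^0;\ \lambda^{-1}\boldsymbol{\phi}^0;\ \dots;\ \lambda^{-k}\boldsymbol{\phi}^0]\in\mathbb{C}^{(k+1)D}$ (blocks stacked vertically). Then $(\lambda,\boldsymbol{\phi})$ is an eigenpair of $\mathbf{C}_x$, i.e. $\boldsymbol{\phi}\neq 0$ and $\mathbf{C}_x\boldsymbol{\phi}=\lambda\boldsymbol{\phi}$.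
   Context: This is the setting of the Mori–Zwanzig modal decomposition: states evolve by the memory recursion $\mathbf{x}_{n+1}=\boldsymbol{\Omega}_0^{(x)}\mathbf{x}_n+\dots+\boldsymbol{\Omega}_k^{(x)}\mathbf{x}_{n-k}$ with linear Mori–Zwanzig operators $\boldsymbol{\Omega}_i^{(x)}$ acting on state space, and the observables are $\mathbf{g}(\mathbf{x}_n)=\mathbf{U}^*\mathbf{x}_n$ (projections onto the POD modes, i.e. left singular vectors of the snapshot matrix), which evolve by the same recursion with the operators $\boldsymbol{\Omega}_i^{(g)}=\mathbf{U}^*\boldsymbol{\Omega}_i^{(x)}\mathbf{U}$. $\mathbf{U}^*$ denotes the conjugate transpose. *)

theory Defs
  imports "Jordan_Normal_Form.Matrix"
begin

definition adj :: "complex mat \<Rightarrow> complex mat" where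
  "adj A = mat (dim_col A) (dim_row A) (\<lambda>(i,j). cnj (A $$ (j,i)))"

definition unitary :: "nat \<Rightarrow> complex mat \<Rightarrow> bool" where
  "unitary n U \<longleftrightarrow> U \<in> carrier_mat n n \<and> adj U * U = 1\<^sub>m n \<and> U * adj U = 1\<^sub>m n"

definition full_svd :: "nat \<Rightarrow> nat \<Rightarrow> complex mat \<Rightarrow> complex mat \<Rightarrow> complex mat \<Rightarrow> complex mat \<Rightarrow> bool" where
  "full_svd D m X U S V \<longleftrightarrow>
     X \<in> carrier_mat D m \<and> unitary D U \<and> unitary m V \<and> S \<in> carrier_mat D m \<and>
     (\<forall>i<D. \<forall>j<m. i \<noteq> j \<longrightarrow> S $$ (i,j) = 0) \<and>
     (\<forall>i<min D m. S $$ (i,i) \<in> \<real> \<and> Re (S $$ (i,i)) \<ge> 0) \<and>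
     (\<forall>i j. i \<le> j \<and> j < min D m \<longrightarrow> Re (S $$ (j,j)) \<le> Re (S $$ (i,i))) \<and>
     X = U * S * adj V"

(* (k+1)D x (k+1)D block companion matrix with first block row Om 0, ..., Om k,
   identity blocks on the block subdiagonal, zeros elsewhere *)
definition block_companion :: "nat \<Rightarrow> nat \<Rightarrow> (nat \<Rightarrow> complex mat) \<Rightarrow> complex mat" where
  "block_companion D k Om = mat ((k+1)*D) ((k+1)*D) (\<lambda>(i,j).
     if i < D then Om (j div D) $$ (i, j mod D)
     else if i div D = j div D + 1 \<and> i mod D = j mod D then 1 else 0)"

definition vblock :: "nat \<Rightarrow> complex vec \<Rightarrow> nat \<Rightarrow> complex vec" where
  "vblock D w j = vec D (\<lambda>r. w $ (j*D + r))"

definition geom_stack :: "nat \<Rightarrow> nat \<Rightarrow> complex \<Rightarrow> complex vec \<Rightarrow> complex vec" where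
  "geom_stack D k c p = vec ((k+1)*D) (\<lambda>i. (inverse c) ^ (i div D) * p $ (i mod D))"

end

theory Submission
  imports Defs
begin

text \<open>An eigenvector of a block companion matrix with nonzero eigenvalue \<open>\<lambda>\<close> is forced by the
  identity blocks to be a geometric stack \<open>[p; \<lambda>\<^sup>-\<^sup>1 p; \<dots>; \<lambda>\<^sup>-\<^sup>k p]\<close>, and such a stack is an eigenvector
  exactly when \<open>p\<close> solves the polynomial eigenproblem \<open>(\<Sum>\<^sub>b \<lambda>\<^sup>-\<^sup>b \<Omega>\<^sub>b) p = \<lambda> p\<close> read off the first block
  row. Conjugating every \<open>\<Omega>\<^sub>b\<close> by the unitary \<open>U\<close> conjugates this matrix polynomial, so \<open>U\<close> maps
  its solutions for \<open>\<Omega>\<^sup>(\<^sup>g\<^sup>)\<close> to its solutions for \<open>\<Omega>\<^sup>(\<^sup>x\<^sup>)\<close>.\<close>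

definition mat_poly :: "nat \<Rightarrow> nat \<Rightarrow> (nat \<Rightarrow> 'a :: comm_ring_1 mat) \<Rightarrow> 'a \<Rightarrow> 'a mat" where
  "mat_poly n k Om z = mat n n (\<lambda>(i,j). \<Sum>b\<le>k. z ^ b * Om b $$ (i,j))"

lemma dim_mat_poly [simp]:
  "dim_row (mat_poly n k Om z) = n" "dim_col (mat_poly n k Om z) = n"
  by (simp_all add: mat_poly_def)

lemma mat_poly_carrier [simp]: "mat_poly n k Om z \<in> carrier_mat n n"
  by (simp add: carrier_matI)

lemma index_mult_mat_vec_mat_poly:
  assumes "\<And>b. b \<le> k \<Longrightarrow> Om b \<in> carrier_mat n n" and "x \<in> carrier_vec n" and "i < n"
  shows "(mat_poly n k Om z *\<^sub>v x) $ i = (\<Sum>b\<le>k. z ^ b * (Om b *\<^sub>v x) $ i)"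
proof -
  have "(\<Sum>b\<le>k. z ^ b * (Om b *\<^sub>v x) $ i) = (\<Sum>b\<le>k. \<Sum>j<n. z ^ b * Om b $$ (i,j) * x $ j)"
    using assms(2,3) carrier_matD[OF assms(1)]
    by (intro sum.cong) (auto simp: scalar_prod_def row_def sum_distrib_left mult.assoc lessThan_atLeast0)
  then show ?thesis
    using assms(2,3) by (simp add: mat_poly_def scalar_prod_def row_def sum_distrib_right
        sum.swap[where A = "{..k}"] lessThan_atLeast0)
qed

lemma mult_mat_poly:
  assumes "A \<in> carrier_mat n n" and "\<And>b. b \<le> k \<Longrightarrow> Om b \<in> carrier_mat n n"
  shows "A * mat_poly n k Om z = mat_poly n k (\<lambda>b. A * Om b) z"
proof (rule eq_matI)
  fix i j
  assume "i < dim_row (mat_poly n k (\<lambda>b. A * Om b) z)" "j < dim_col (mat_poly n k (\<lambda>b. A * Om b) z)"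
  then have ij: "i < n" "j < n"
    by simp_all
  have "(\<Sum>b\<le>k. z ^ b * (A * Om b) $$ (i,j)) = (\<Sum>b\<le>k. \<Sum>l<n. A $$ (i,l) * (z ^ b * Om b $$ (l,j)))"
    using assms(1) ij carrier_matD[OF assms(2)]
    by (intro sum.cong) (auto simp: scalar_prod_def row_def col_def sum_distrib_left mult.left_commute
        lessThan_atLeast0)
  then show "(A * mat_poly n k Om z) $$ (i,j) = mat_poly n k (\<lambda>b. A * Om b) z $$ (i,j)"
    using assms(1) ij by (simp add: mat_poly_def scalar_prod_def row_def col_def sum_distrib_left
        sum.swap[where A = "{..k}"] lessThan_atLeast0)
qed (use assms in auto)

lemma mat_poly_mult:
  assumes "B \<in> carrier_mat n n" and "\<And>b. b \<le> k \<Longrightarrow> Om b \<in> carrier_mat n n"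
  shows "mat_poly n k Om z * B = mat_poly n k (\<lambda>b. Om b * B) z"
proof (rule eq_matI)
  fix i j
  assume "i < dim_row (mat_poly n k (\<lambda>b. Om b * B) z)" "j < dim_col (mat_poly n k (\<lambda>b. Om b * B) z)"
  then have ij: "i < n" "j < n"
    by simp_all
  have "(\<Sum>b\<le>k. z ^ b * (Om b * B) $$ (i,j)) = (\<Sum>b\<le>k. \<Sum>l<n. z ^ b * Om b $$ (i,l) * B $$ (l,j))"
    using assms(1) ij carrier_matD[OF assms(2)]
    by (intro sum.cong) (auto simp: scalar_prod_def row_def col_def sum_distrib_left mult.assoc
        lessThan_atLeast0)
  then show "(mat_poly n k Om z * B) $$ (i,j) = mat_poly n k (\<lambda>b. Om b * B) z $$ (i,j)"
    using assms(1) ij by (simp add: mat_poly_def scalar_prod_def row_def col_def sum_distrib_right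
        sum.swap[where A = "{..k}"] lessThan_atLeast0)
qed (use assms in auto)

lemma mat_poly_conj:
  assumes "A \<in> carrier_mat n n" "B \<in> carrier_mat n n" and "\<And>b. b \<le> k \<Longrightarrow> Om b \<in> carrier_mat n n"
  shows "mat_poly n k (\<lambda>b. A * Om b * B) z = A * mat_poly n k Om z * B"
  using assms by (simp add: mult_mat_poly mat_poly_mult)

lemma adj_carrier [simp]: "U \<in> carrier_mat n m \<Longrightarrow> adj U \<in> carrier_mat m n"
  by (simp add: adj_def)

lemma unitary_mult_vec_eq_zero:
  assumes "unitary n U" and "x \<in> carrier_vec n"
  shows "U *\<^sub>v x = 0\<^sub>v n \<longleftrightarrow> x = 0\<^sub>v n"
proof
  have U: "U \<in> carrier_mat n n" and UU: "adj U * U = 1\<^sub>m n"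
    using assms(1) by (auto simp: unitary_def)
  have aU: "adj U \<in> carrier_mat n n"
    using U by simp
  assume "U *\<^sub>v x = 0\<^sub>v n"
  then have "adj U *\<^sub>v (U *\<^sub>v x) = 0\<^sub>v n"
    using aU by auto
  then show "x = 0\<^sub>v n"
    using U assms(2) by (simp add: UU flip: assoc_mult_mat_vec[of _ n n])
qed (use assms in \<open>auto simp: unitary_def\<close>)

lemma unitary_conj_eigenvector:
  assumes "unitary n U" "M \<in> carrier_mat n n" "x \<in> carrier_vec n"
    and "(adj U * M * U) *\<^sub>v x = c \<cdot>\<^sub>v x"
  shows "M *\<^sub>v (U *\<^sub>v x) = c \<cdot>\<^sub>v (U *\<^sub>v x)"
proof -
  have U: "U \<in> carrier_mat n n" and UU: "U * adj U = 1\<^sub>m n"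
    using assms(1) by (auto simp: unitary_def)
  have aU: "adj U \<in> carrier_mat n n"
    using U by simp
  have conj: "adj U * M * U \<in> carrier_mat n n"
    using U aU assms(2) by (meson mult_carrier_mat)
  have "M *\<^sub>v (U *\<^sub>v x) = (U * adj U * M * U) *\<^sub>v x"
    using U assms(2,3) by (simp add: UU assoc_mult_mat_vec)
  also have "\<dots> = (U * (adj U * M * U)) *\<^sub>v x"
    using assoc_mult_mat[OF U aU assms(2)] assoc_mult_mat[OF U mult_carrier_mat[OF aU assms(2)] U]
    by simp
  also have "\<dots> = U *\<^sub>v ((adj U * M * U) *\<^sub>v x)"
    using U conj assms(3) by (rule assoc_mult_mat_vec)
  also have "\<dots> = c \<cdot>\<^sub>v (U *\<^sub>v x)"
    using U assms(3,4) by (simp add: mult_mat_vec)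
  finally show ?thesis .
qed

lemma dim_block_companion [simp]:
  "dim_row (block_companion D k Om) = (k+1)*D" "dim_col (block_companion D k Om) = (k+1)*D"
  by (simp_all add: block_companion_def)

lemma sum_lessThan_mult_blocks:
  fixes g :: "nat \<Rightarrow> 'a::comm_monoid_add"
  shows "sum g {..<n*D} = (\<Sum>b<n. \<Sum>r<D. g (b*D + r))"
proof -
  have "sum g {b*D..<b*D+D} = (\<Sum>r<D. g (b*D + r))" for b
    using sum.shift_bounds_nat_ivl[of g 0 "b*D" D] by (simp add: add.commute atLeast0LessThan)
  then show ?thesis
    by (simp flip: sum.nat_group)
qed

lemma block_companion_mult_vec_top:
  assumes "v \<in> carrier_vec ((k+1)*D)" "i < D" and "\<And>b. b \<le> k \<Longrightarrow> Om b \<in> carrier_mat D D"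
  shows "(block_companion D k Om *\<^sub>v v) $ i = (\<Sum>b\<le>k. (Om b *\<^sub>v vblock D v b) $ i)"
proof -
  have "(block_companion D k Om *\<^sub>v v) $ i = (\<Sum>j<(k+1)*D. Om (j div D) $$ (i, j mod D) * v $ j)"
    using assms(1,2) by (auto simp: block_companion_def scalar_prod_def row_def lessThan_atLeast0)
  also have "\<dots> = (\<Sum>b\<le>k. \<Sum>r<D. Om b $$ (i, r) * v $ (b*D + r))"
    by (subst sum_lessThan_mult_blocks) (simp add: lessThan_Suc_atMost)
  also have "\<dots> = (\<Sum>b\<le>k. (Om b *\<^sub>v vblock D v b) $ i)"
    using assms(2) carrier_matD[OF assms(3)]
    by (auto simp: vblock_def scalar_prod_def row_def lessThan_atLeast0 intro!: sum.cong)
  finally show ?thesis .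
qed

lemma block_companion_mult_vec_shift:
  assumes "v \<in> carrier_vec ((k+1)*D)" "D \<le> i" "i < (k+1)*D"
  shows "(block_companion D k Om *\<^sub>v v) $ i = v $ (i - D)"
proof -
  have "D > 0"
    using assms(2,3) by (cases D) auto
  then have "i div D = Suc (j div D) \<and> i mod D = j mod D \<longleftrightarrow> j = i - D" for j
    using assms(2) by (metis add_diff_cancel_right' div_mult_mod_eq le_div_geq le_mod_geq mod_div_trivial
        mult_Suc plus_1_eq_Suc add.commute add.left_commute)
  moreover have "(if j = i - D then 1 else 0) * v $ j = (if j = i - D then v $ j else 0)" for j
    by simp
  ultimately have "(block_companion D k Om *\<^sub>v v) $ i = (\<Sum>j<(k+1)*D. if j = i - D then v $ j else 0)"
    using assms by (auto simp: block_companion_def scalar_prod_def row_def lessThan_atLeast0 intro!: sum.cong)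
  also have "\<dots> = v $ (i - D)"
    using assms by simp
  finally show ?thesis .
qed

lemma vblock_geom_stack:
  assumes "p \<in> carrier_vec D" "b \<le> k"
  shows "vblock D (geom_stack D k c p) b = inverse c ^ b \<cdot>\<^sub>v p"
proof (rule eq_vecI)
  fix r assume "r < dim_vec (inverse c ^ b \<cdot>\<^sub>v p)"
  then have r: "r < D"
    using assms(1) by simp
  have "b*D + r < (b+1)*D"
    using r by simp
  also have "\<dots> \<le> (k+1)*D"
    using assms(2) by (intro mult_right_mono) auto
  finally show "vblock D (geom_stack D k c p) b $ r = (inverse c ^ b \<cdot>\<^sub>v p) $ r"
    using r assms(1) by (simp add: vblock_def geom_stack_def)
qed (use assms(1) in \<open>simp add: vblock_def\<close>)

lemma geom_stack_eq_zero_iff: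
  assumes "p \<in> carrier_vec D"
  shows "geom_stack D k c p = 0\<^sub>v ((k+1)*D) \<longleftrightarrow> p = 0\<^sub>v D"
proof
  assume "geom_stack D k c p = 0\<^sub>v ((k+1)*D)"
  then have "vblock D (0\<^sub>v ((k+1)*D)) 0 = p"
    using vblock_geom_stack[OF assms, of 0 k c] by simp
  then show "p = 0\<^sub>v D"
    by (auto simp: vblock_def)
next
  assume "p = 0\<^sub>v D"
  then show "geom_stack D k c p = 0\<^sub>v ((k+1)*D)"
    by (cases "D = 0") (auto simp: geom_stack_def)
qed

lemma block_companion_eigenvector_eq_geom_stack:
  assumes "v \<in> carrier_vec ((k+1)*D)" "c \<noteq> 0"
    and "block_companion D k Om *\<^sub>v v = c \<cdot>\<^sub>v v"
  shows "v = geom_stack D k c (vblock D v 0)"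
proof -
  have "v $ i = inverse c ^ (i div D) * v $ (i mod D)" if "i < (k+1)*D" for i
    using that
  proof (induction i rule: less_induct)
    case (less i)
    show ?case
    proof (cases "i < D")
      case False
      then have "D > 0" "D \<le> i"
        using less.prems by (auto intro!: gr0I)
      have "c * v $ i = v $ (i - D)"
        using block_companion_mult_vec_shift[OF assms(1) \<open>D \<le> i\<close> less.prems, of Om] assms(1,3) less.prems
        by (metis index_smult_vec(1) carrier_vecD)
      also have "\<dots> = inverse c ^ ((i - D) div D) * v $ ((i - D) mod D)"
        using less.IH \<open>D > 0\<close> \<open>D \<le> i\<close> less.prems by simp
      finally show ?thesis
        using \<open>D > 0\<close> \<open>D \<le> i\<close> assms(2) by (simp add: le_div_geq le_mod_geq field_simps)
    qed simp
  qed
  then show ?thesis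
    using assms(1) by (cases "D = 0") (auto simp: geom_stack_def vblock_def)
qed

lemma block_companion_geom_stack_eigen_iff:
  assumes "c \<noteq> 0" "p \<in> carrier_vec D" and "\<And>b. b \<le> k \<Longrightarrow> Om b \<in> carrier_mat D D"
  shows "block_companion D k Om *\<^sub>v geom_stack D k c p = c \<cdot>\<^sub>v geom_stack D k c p
     \<longleftrightarrow> mat_poly D k Om (inverse c) *\<^sub>v p = c \<cdot>\<^sub>v p"
proof -
  define g where "g = geom_stack D k c p"
  have g: "g \<in> carrier_vec ((k+1)*D)"
    by (simp add: g_def geom_stack_def)
  have g_top: "g $ i = p $ i" if "i < D" for i
    using that by (simp add: g_def geom_stack_def)
  have top: "(block_companion D k Om *\<^sub>v g) $ i = (mat_poly D k Om (inverse c) *\<^sub>v p) $ i"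
    if "i < D" for i
  proof -
    have "(block_companion D k Om *\<^sub>v g) $ i = (\<Sum>b\<le>k. (Om b *\<^sub>v vblock D g b) $ i)"
      by (rule block_companion_mult_vec_top[OF g that assms(3)])
    also have "\<dots> = (\<Sum>b\<le>k. inverse c ^ b * (Om b *\<^sub>v p) $ i)"
      using that assms(2) mult_mat_vec[OF assms(3)] carrier_matD[OF assms(3)]
      by (auto simp: g_def vblock_geom_stack intro!: sum.cong)
    also have "\<dots> = (mat_poly D k Om (inverse c) *\<^sub>v p) $ i"
      by (rule index_mult_mat_vec_mat_poly[OF assms(3,2) that, symmetric])
    finally show ?thesis .
  qed
  have shift: "(block_companion D k Om *\<^sub>v g) $ i = c * g $ i"
    if "D \<le> i" "i < (k+1)*D" for i
  proof -
    have "D > 0"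
      using that by (auto intro!: gr0I)
    have "(block_companion D k Om *\<^sub>v g) $ i = g $ (i - D)"
      by (rule block_companion_mult_vec_shift[OF g that])
    also have "\<dots> = c * g $ i"
      using \<open>D > 0\<close> that assms(1) by (simp add: g_def geom_stack_def le_div_geq le_mod_geq)
    finally show ?thesis .
  qed
  have "block_companion D k Om *\<^sub>v g = c \<cdot>\<^sub>v g
      \<longleftrightarrow> (\<forall>i<(k+1)*D. (block_companion D k Om *\<^sub>v g) $ i = c * g $ i)"
    using g by (auto simp: vec_eq_iff)
  also have "\<dots> \<longleftrightarrow> (\<forall>i<D. (block_companion D k Om *\<^sub>v g) $ i = c * g $ i)"
  proof
    assume "\<forall>i<D. (block_companion D k Om *\<^sub>v g) $ i = c * g $ i"
    then show "\<forall>i<(k+1)*D. (block_companion D k Om *\<^sub>v g) $ i = c * g $ i"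
      using shift by (metis not_less)
  qed simp
  also have "\<dots> \<longleftrightarrow> (\<forall>i<D. (mat_poly D k Om (inverse c) *\<^sub>v p) $ i = c * p $ i)"
    by (simp add: top g_top del: index_mult_mat_vec)
  also have "\<dots> \<longleftrightarrow> mat_poly D k Om (inverse c) *\<^sub>v p = c \<cdot>\<^sub>v p"
    using assms(2) by (auto simp: vec_eq_iff)
  finally show ?thesis
    by (simp add: g_def)
qed

theorem theorem1:
  fixes D k m :: nat
    and X U S V :: "complex mat"
    and Omx :: "nat \<Rightarrow> complex mat"
    and lam :: complex and w :: "complex vec"
  assumes "D \<ge> 1"
    and "full_svd D m X U S V"
    and "\<And>i. i \<le> k \<Longrightarrow> Omx i \<in> carrier_mat D D"
    and "lam \<noteq> 0"
    and "w \<in> carrier_vec ((k+1)*D)"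
    and "w \<noteq> 0\<^sub>v ((k+1)*D)"
    and "block_companion D k (\<lambda>i. adj U * Omx i * U) *\<^sub>v w = lam \<cdot>\<^sub>v w"
  shows "geom_stack D k lam (U *\<^sub>v vblock D w 0) \<noteq> 0\<^sub>v ((k+1)*D)
       \<and> block_companion D k Omx *\<^sub>v geom_stack D k lam (U *\<^sub>v vblock D w 0)
           = lam \<cdot>\<^sub>v geom_stack D k lam (U *\<^sub>v vblock D w 0)"
proof -
  define w0 where "w0 = vblock D w 0"
  have U: "unitary D U"
    using assms(2) by (simp add: full_svd_def)
  then have U_carrier: "U \<in> carrier_mat D D"
    by (simp add: unitary_def)
  have Omg: "adj U * Omx i * U \<in> carrier_mat D D" if "i \<le> k" for i
    using U_carrier assms(3)[OF that] by (meson adj_carrier mult_carrier_mat)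
  have w0: "w0 \<in> carrier_vec D"
    by (simp add: w0_def vblock_def)
  have w_stack: "w = geom_stack D k lam w0"
    unfolding w0_def by (rule block_companion_eigenvector_eq_geom_stack[OF assms(5,4,7)])
  then have "U *\<^sub>v w0 \<noteq> 0\<^sub>v D"
    using assms(6) geom_stack_eq_zero_iff[OF w0] unitary_mult_vec_eq_zero[OF U w0] by auto
  have "mat_poly D k (\<lambda>i. adj U * Omx i * U) (inverse lam) *\<^sub>v w0 = lam \<cdot>\<^sub>v w0"
    using assms(7) block_companion_geom_stack_eigen_iff[OF assms(4) w0 Omg] w_stack by simp
  then have "(adj U * mat_poly D k Omx (inverse lam) * U) *\<^sub>v w0 = lam \<cdot>\<^sub>v w0"
    by (simp add: mat_poly_conj[OF adj_carrier[OF U_carrier] U_carrier assms(3)])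
  then have "mat_poly D k Omx (inverse lam) *\<^sub>v (U *\<^sub>v w0) = lam \<cdot>\<^sub>v (U *\<^sub>v w0)"
    by (rule unitary_conj_eigenvector[OF U mat_poly_carrier w0])
  with \<open>U *\<^sub>v w0 \<noteq> 0\<^sub>v D\<close> show ?thesis
    using U_carrier w0 geom_stack_eq_zero_iff block_companion_geom_stack_eigen_iff[OF assms(4) _ assms(3)]
    by (simp add: w0_def)
qed

end
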